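(* Let $K$ be a finite field of odd characteristic, $\omega\in K$ a non-square, and $d:V\times V\to K$ a non-degenerate symmetric bilinear form with $n=\dim V$ and $\operatorname{disc}d=[\omega^c]$, $c\in\{0,1\}$. Then the set of addresses of orthogonal bases of $d$ is $\{(n-(c+2k):c+2k) : 0\le k\le\frac{n-c}{2}\}$. In particular there are $1+\lfloor\frac{n-c}{2}\rfloor$ addresses.
   Context: The discriminant $\operatorname{disc}d$ is the class modulo $(K^\times)^2$ of the determinant of the Gram matrix of $d$ in any basis; $[a]$ denotes $a(K^\times)^2$. An orthogonal basis of $d$ is a basis $\{x_1,\dots,x_n\}$ of $V$ with $d(x_i,x_j)=0$ for $i\neq j$. Its address is $(n-s:s)$, where $s$ is the number of $i$ with $d(x_i,x_i)$ a non-square in $K$. *)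

theory Defs
  imports Main "Jordan_Normal_Form.Determinant"
begin

text \<open>Squares in the field (including 0; on non-zero elements this is membership in (K^x)^2).\<close>
definition is_square :: "'a::field \<Rightarrow> bool" where
  "is_square a \<longleftrightarrow> (\<exists>y. a = y ^ 2)"

definition bilinear_form :: "('a::field \<Rightarrow> 'v::ab_group_add \<Rightarrow> 'v) \<Rightarrow> ('v \<Rightarrow> 'v \<Rightarrow> 'a) \<Rightarrow> bool" where
  "bilinear_form scale d \<longleftrightarrow>
     (\<forall>x y z. d (x + y) z = d x z + d y z) \<and>
     (\<forall>x y z. d x (y + z) = d x y + d x z) \<and>
     (\<forall>a x y. d (scale a x) y = a * d x y) \<and>
     (\<forall>a x y. d x (scale a y) = a * d x y)"

definition symmetric_form :: "('v \<Rightarrow> 'v \<Rightarrow> 'a) \<Rightarrow> bool" where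
  "symmetric_form d \<longleftrightarrow> (\<forall>x y. d x y = d y x)"

definition nondegenerate_form :: "('v::zero \<Rightarrow> 'v \<Rightarrow> 'a::zero) \<Rightarrow> bool" where
  "nondegenerate_form d \<longleftrightarrow> (\<forall>x. (\<forall>y. d x y = 0) \<longrightarrow> x = 0)"

definition is_basis_list :: "('a::field \<Rightarrow> 'v::ab_group_add \<Rightarrow> 'v) \<Rightarrow> 'v list \<Rightarrow> bool" where
  "is_basis_list scale bs \<longleftrightarrow> distinct bs \<and> \<not> module.dependent scale (set bs)
      \<and> module.span scale (set bs) = UNIV"

definition gram_det :: "('v \<Rightarrow> 'v \<Rightarrow> 'a::comm_ring_1) \<Rightarrow> 'v list \<Rightarrow> 'a" where
  "gram_det d bs = det (mat (length bs) (length bs) (\<lambda>(i, j). d (bs ! i) (bs ! j)))"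

text \<open>disc d = [a]: the Gram determinant (in some, equivalently any, basis) lies in a (K^x)^2.\<close>
definition disc_is :: "('a::field \<Rightarrow> 'v::ab_group_add \<Rightarrow> 'v) \<Rightarrow> ('v \<Rightarrow> 'v \<Rightarrow> 'a) \<Rightarrow> 'a \<Rightarrow> bool" where
  "disc_is scale d a \<longleftrightarrow>
     (\<exists>bs. is_basis_list scale bs \<and> (\<exists>t. t \<noteq> 0 \<and> gram_det d bs = a * t ^ 2))"

definition orthogonal_basis :: "('a::field \<Rightarrow> 'v::ab_group_add \<Rightarrow> 'v) \<Rightarrow> ('v \<Rightarrow> 'v \<Rightarrow> 'a) \<Rightarrow> 'v set \<Rightarrow> bool" where
  "orthogonal_basis scale d B \<longleftrightarrow>
     \<not> module.dependent scale B \<and> module.span scale B = UNIV \<and>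
     (\<forall>x\<in>B. \<forall>y\<in>B. x \<noteq> y \<longrightarrow> d x y = 0)"

definition address :: "('a::field \<Rightarrow> 'v::ab_group_add \<Rightarrow> 'v) \<Rightarrow> ('v \<Rightarrow> 'v \<Rightarrow> 'a) \<Rightarrow> 'v set \<Rightarrow> nat \<times> nat" where
  "address scale d B =
     (let s = card {x\<in>B. \<not> is_square (d x x)} in (vector_space.dim scale UNIV - s, s))"

end

theory Submission
  imports Defs
begin

text \<open>
  Over a finite field of odd characteristic the non-zero squares have index 2 in \<open>K\<^sup>\<times>\<close>, and by
  pigeonhole every diagonal binary form \<open>a x\<^sup>2 + b y\<^sup>2\<close> with \<open>a b \<noteq> 0\<close> represents every element.
  For an orthogonal basis the Gram matrix is diagonal, so the product of the values \<open>d(x,x)\<close> lies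
  in the discriminant class, and the number \<open>s\<close> of non-square values has the parity of \<open>c\<close>.
  Conversely, two basis vectors \<open>e\<^sub>1, e\<^sub>2\<close> can be replaced by an orthogonal basis \<open>v, w\<close> of
  their plane with \<open>d(v,v) = t\<close> arbitrary and \<open>d(w,w) = d(e\<^sub>1,e\<^sub>1) d(e\<^sub>2,e\<^sub>2) t\<close>; choosing
  \<open>t\<close> suitably moves \<open>s\<close> up or down by 2, so every \<open>s \<le> n\<close> with \<open>s \<equiv> c (mod 2)\<close> occurs.
\<close>

lemma card_nonzero_eq_twice_card_nonzero_squares:
  assumes two: "(2::'a::{field,finite}) \<noteq> 0"
  shows "card (UNIV - {0::'a}) = 2 * card {y::'a. y \<noteq> 0 \<and> is_square y}"
proof -
  let ?S = "{y::'a. y \<noteq> 0 \<and> is_square y}"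
  let ?roots = "\<lambda>s. {x::'a. x^2 = s}"
  have "card (?roots s) = 2" if "s \<in> ?S" for s
  proof -
    from that obtain r where r: "s = r^2" "r \<noteq> 0" by (auto simp: is_square_def)
    have "?roots s = {r, -r}"
      using r by (auto simp: power2_eq_iff)
    moreover have "r \<noteq> -r"
      using two r by (metis add_eq_0_iff mult_2 mult_eq_0_iff)
    ultimately show ?thesis by simp
  qed
  moreover have "UNIV - {0::'a} = (\<Union>s\<in>?S. ?roots s)"
    by (auto simp: is_square_def)
  then have "card (UNIV - {0::'a}) = (\<Sum>s\<in>?S. card (?roots s))"
    by (simp only:) (rule card_UN_disjoint, auto)
  ultimately show ?thesis by simp
qed

lemma exists_nonsquare:
  assumes "(2::'a::{field,finite}) \<noteq> 0"
  shows "\<exists>\<omega>::'a. \<not> is_square \<omega>"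
proof (rule ccontr)
  assume "\<not> ?thesis"
  then have "{y::'a. y \<noteq> 0 \<and> is_square y} = UNIV - {0}" by auto
  with card_nonzero_eq_twice_card_nonzero_squares[OF assms] have "card (UNIV - {0::'a}) = 0"
    by simp
  then have "UNIV - {0::'a} = {}" by (simp only: card_0_eq finite)
  then show False using one_neq_zero by blast
qed

lemma nonsquare_mult_square:
  fixes u w :: "'a::field"
  assumes "is_square u" "u \<noteq> 0" "\<not> is_square w"
  shows "\<not> is_square (u * w)"
proof
  assume "is_square (u * w)"
  then obtain r y where "u = r^2" "u * w = y^2" using assms(1) by (auto simp: is_square_def)
  then have "w = (y / r)^2" using assms(2) by (simp add: power_divide field_simps)
  with assms(3) show False by (auto simp: is_square_def)
qed

text \<open>Multiplication by a non-square maps the non-zero squares injectively into the non-squares,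
  which have the same number of elements, hence onto them.\<close>
lemma is_square_mult_nonsquares:
  assumes two: "(2::'a::{field,finite}) \<noteq> 0"
    and a: "\<not> is_square (a::'a)" and b: "\<not> is_square b"
  shows "is_square (a * b)"
proof -
  let ?S = "{y::'a. y \<noteq> 0 \<and> is_square y}"
  let ?N = "{y::'a. \<not> is_square y}"
  have a0: "a \<noteq> 0" using a by (auto simp: is_square_def)
  have "UNIV - {0::'a} = ?S \<union> ?N" by (auto simp: is_square_def)
  then have "card (UNIV - {0::'a}) = card ?S + card ?N"
    by (simp only:) (rule card_Un_disjoint, auto)
  with card_nonzero_eq_twice_card_nonzero_squares[OF two] have "card ?N = card ?S" by simp
  moreover have "(\<lambda>s. s * a) ` ?S \<subseteq> ?N"
    using nonsquare_mult_square a by auto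
  moreover have "card ((\<lambda>s. s * a) ` ?S) = card ?S"
    by (rule card_image) (auto simp: inj_on_def a0)
  ultimately have "(\<lambda>s. s * a) ` ?S = ?N"
    by (intro card_subset_eq) auto
  then have "b \<in> (\<lambda>s. s * a) ` ?S" using b by blast
  then obtain s r where "b = s * a" "s = r^2" by (auto simp: is_square_def)
  then have "a * b = (a * r)^2" by (simp add: power2_eq_square)
  then show ?thesis by (auto simp: is_square_def)
qed

lemma is_square_mult_iff:
  assumes two: "(2::'a::{field,finite}) \<noteq> 0" and "(p::'a) \<noteq> 0" "q \<noteq> 0"
  shows "is_square (p * q) \<longleftrightarrow> (is_square p \<longleftrightarrow> is_square q)"
proof -
  have "is_square (p * q)" if "is_square p" "is_square q"
    using that unfolding is_square_def by (metis power_mult_distrib)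
  then show ?thesis
    using assms nonsquare_mult_square[of p q] nonsquare_mult_square[of q p]
      is_square_mult_nonsquares[OF two, of p q]
    by (metis mult.commute)
qed

lemma is_square_prod_iff_even_card:
  assumes two: "(2::'a::{field,finite}) \<noteq> 0" and "finite B" and "\<forall>x\<in>B. (f x::'a) \<noteq> 0"
  shows "is_square (\<Prod>x\<in>B. f x) \<longleftrightarrow> even (card {x\<in>B. \<not> is_square (f x)})"
  using assms(2,3)
proof (induction B rule: finite_induct)
  case empty
  then show ?case by (auto simp: is_square_def intro: exI[of _ 1])
next
  case (insert x F)
  have "{y\<in>insert x F. \<not> is_square (f y)} =
        (if is_square (f x) then {y\<in>F. \<not> is_square (f y)} else insert x {y\<in>F. \<not> is_square (f y)})"
    by auto
  moreover have "(\<Prod>x\<in>F. f x) \<noteq> 0" using insert by auto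
  ultimately show ?case
    using insert is_square_mult_iff[OF two, of "f x" "\<Prod>x\<in>F. f x"] by auto
qed

lemma is_square_nonsquare_power_mult_square:
  assumes two: "(2::'a::{field,finite}) \<noteq> 0" and \<omega>: "\<not> is_square \<omega>"
    and "(t::'a) \<noteq> 0" and "c \<in> {0, 1::nat}"
  shows "is_square (\<omega> ^ c * t^2) \<longleftrightarrow> c = 0"
proof -
  have "is_square (t^2)" "t^2 \<noteq> 0" "\<omega> \<noteq> 0"
    using assms by (auto simp: is_square_def)
  then show ?thesis
    using assms is_square_mult_iff[OF two, of \<omega> "t^2"] by auto
qed

lemma exists_diagonal_binary_form_eq:
  assumes two: "(2::'a::{field,finite}) \<noteq> 0" and a: "(a::'a) \<noteq> 0" and b: "b \<noteq> 0"
  shows "\<exists>x y. a * x^2 + b * y^2 = t"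
proof -
  let ?S = "{y::'a. y \<noteq> 0 \<and> is_square y}"
  let ?Q = "range (\<lambda>x::'a. x^2)"
  have "?Q = insert 0 ?S" by (auto simp: is_square_def)
  then have cQ: "card ?Q = card ?S + 1" by simp
  have "card (UNIV::'a set) = card (UNIV - {0::'a}) + 1"
    by (metis Suc_eq_plus1 card_Suc_Diff1 finite_UNIV UNIV_I)
  then have cU: "card (UNIV::'a set) = 2 * card ?S + 1"
    using card_nonzero_eq_twice_card_nonzero_squares[OF two] by simp
  let ?A = "(\<lambda>z. a * z) ` ?Q"
  let ?B = "(\<lambda>z. t - b * z) ` ?Q"
  have "card ?A = card ?Q" "card ?B = card ?Q"
    by (auto intro!: card_image simp: inj_on_def a b)
  then have "card (?A \<union> ?B) < card ?A + card ?B"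
    using cQ cU card_mono[of UNIV "?A \<union> ?B"] by simp
  then have "?A \<inter> ?B \<noteq> {}"
    using card_Un_disjoint[of ?A ?B] by auto
  then obtain x y where "a * x^2 = t - b * y^2" by auto
  then have "a * x^2 + b * y^2 = t" by (simp add: algebra_simps)
  then show ?thesis by blast
qed

definition nonsquare_count :: "('v \<Rightarrow> 'v \<Rightarrow> 'a::field) \<Rightarrow> 'v set \<Rightarrow> nat" where
  "nonsquare_count d B = card {x\<in>B. \<not> is_square (d x x)}"

lemma address_eq:
  "address scale d B = (vector_space.dim scale UNIV - nonsquare_count d B, nonsquare_count d B)"
  by (simp add: address_def nonsquare_count_def Let_def)

lemma nonsquare_count_insert:
  assumes "finite R" "v \<notin> R"
  shows "nonsquare_count d (insert v R) = nonsquare_count d R + (if is_square (d v v) then 0 else 1)"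
proof -
  have "{x\<in>insert v R. \<not> is_square (d x x)} = (if is_square (d v v) then {x\<in>R. \<not> is_square (d x x)}
      else insert v {x\<in>R. \<not> is_square (d x x)})"
    by auto
  then show ?thesis using assms by (simp add: nonsquare_count_def)
qed

lemma nonsquare_count_insert_insert:
  assumes "finite R" "v \<notin> R" "w \<notin> R" "v \<noteq> w"
  shows "nonsquare_count d (insert v (insert w R)) = nonsquare_count d R
    + (if is_square (d v v) then 0 else 1) + (if is_square (d w w) then 0 else 1)"
  using assms by (simp add: nonsquare_count_insert)

lemma nonsquare_count_le_card: "finite B \<Longrightarrow> nonsquare_count d B \<le> card B"
  unfolding nonsquare_count_def by (rule card_mono) auto

lemma gram_det_pairwise_orthogonal:
  assumes "distinct cs" "pairwise (\<lambda>x y. d x y = 0) (set cs)"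
  shows "gram_det d cs = (\<Prod>x\<in>set cs. d x x)"
proof -
  let ?n = "length cs"
  let ?G = "mat ?n ?n (\<lambda>(i, j). d (cs ! i) (cs ! j))"
  have "upper_triangular ?G"
    using assms by (auto simp: upper_triangular_def pairwise_def nth_eq_iff_index_eq)
  then have "det ?G = prod_list (diag_mat ?G)"
    by (rule det_upper_triangular[of _ ?n]) simp
  also have "\<dots> = (\<Prod>i<?n. d (cs ! i) (cs ! i))"
    by (simp add: prod_list_diag_prod atLeast0LessThan)
  also have "\<dots> = (\<Prod>x\<in>set cs. d x x)"
    using prod.reindex_bij_betw[OF bij_betw_nth[OF assms(1) refl refl]] .
  finally show ?thesis unfolding gram_det_def .
qed

lemma det_congruent_mat:
  assumes "P \<in> carrier_mat n n" "G \<in> carrier_mat n n"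
  shows "det (transpose_mat P * G * P) = det G * (det P)^2"
  using assms by (simp add: det_mult[of _ n] det_transpose power2_eq_square)

locale symmetric_bilinear_space = finite_dimensional_vector_space scale Basis
  for scale :: "'a::field \<Rightarrow> 'v::ab_group_add \<Rightarrow> 'v" and Basis :: "'v set" +
  fixes d :: "'v \<Rightarrow> 'v \<Rightarrow> 'a"
  assumes two_neq_zero: "(2::'a) \<noteq> 0"
    and bilinear: "bilinear_form scale d"
    and symmetric: "symmetric_form d"
begin

lemma d_add_left [simp]: "d (x + y) z = d x z + d y z"
  and d_add_right [simp]: "d x (y + z) = d x y + d x z"
  and d_scale_left [simp]: "d (scale a x) y = a * d x y"
  and d_scale_right [simp]: "d x (scale a y) = a * d x y"
  using bilinear unfolding bilinear_form_def by auto

lemma d_commute: "d x y = d y x"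
  using symmetric unfolding symmetric_form_def by auto

lemma d_zero_left [simp]: "d 0 y = 0"
  using d_scale_left[of 0 0 y] by simp

lemma d_zero_right [simp]: "d y 0 = 0"
  using d_scale_right[of y 0 0] by simp

lemma d_diff_left [simp]: "d (x - z) y = d x y - d z y"
  using d_add_left[of "x - z" z y] by (simp add: eq_diff_eq)

lemma d_diff_right [simp]: "d y (x - z) = d y x - d y z"
  using d_add_right[of y "x - z" z] by (simp add: eq_diff_eq)

lemma d_sum_left: "d (\<Sum>i\<in>A. f i) y = (\<Sum>i\<in>A. d (f i) y)"
  by (induction A rule: infinite_finite_induct) auto

lemma d_sum_right: "d y (\<Sum>i\<in>A. f i) = (\<Sum>i\<in>A. d y (f i))"
  by (induction A rule: infinite_finite_induct) auto

lemma orthogonal_basis_iff: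
  "orthogonal_basis scale d B \<longleftrightarrow> independent B \<and> span B = UNIV \<and> pairwise (\<lambda>x y. d x y = 0) B"
  by (simp add: orthogonal_basis_def pairwise_def)

lemma orthogonal_basis_finite_card:
  "orthogonal_basis scale d B \<Longrightarrow> finite B \<and> card B = dim (UNIV :: 'v set)"
  unfolding orthogonal_basis_iff using finiteI_independent basis_card_eq_dim[of B UNIV] by auto

lemma orthogonal_to_span:
  assumes "\<forall>z\<in>S. d x z = 0" "y \<in> span S"
  shows "d x y = 0"
proof -
  have "subspace {y. d x y = 0}" unfolding subspace_def by simp
  then show ?thesis using span_induct[OF assms(2), of "\<lambda>y. d x y = 0"] assms(1) by auto
qed

lemma independent_if_pairwise_orthogonal:
  assumes "pairwise (\<lambda>x y. d x y = 0) S" "\<forall>x\<in>S. d x x \<noteq> 0"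
  shows "independent S"
proof
  assume "dependent S"
  then obtain a where a: "a \<in> S" "a \<in> span (S - {a})" unfolding dependent_def by blast
  have "d a a = 0"
    by (rule orthogonal_to_span[OF _ a(2)]) (use assms(1) a(1) in \<open>auto simp: pairwise_def\<close>)
  with assms(2) a(1) show False by auto
qed

lemma orthogonal_projection:
  assumes "d v v \<noteq> 0"
  shows "d v (z - scale (d v z / d v v) v) = 0"
proof -
  have "d v (z - scale (d v z / d v v) v) = d v z - d v z / d v v * d v v"
    by (simp only: d_diff_right d_scale_right)
  then show ?thesis using assms by simp
qed

lemma totally_isotropic_subspace:
  assumes W: "subspace W" and iso: "\<forall>v\<in>W. d v v = 0" and xy: "x \<in> W" "y \<in> W"
  shows "d x y = 0"
proof -
  have polarization: "d (x + y) (x + y) = d x x + d y y + 2 * d x y"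
    unfolding d_add_left d_add_right d_commute[of y x] mult_2 by (simp only: add_ac)
  have "x + y \<in> W" using W xy subspace_add by blast
  then have "d (x + y) (x + y) = 0" "d x x = 0" "d y y = 0" using iso xy by blast+
  then have "2 * d x y = 0" using polarization by simp
  then show ?thesis using two_neq_zero by simp
qed

lemma span_insert_anisotropic:
  assumes W: "subspace W" and v: "v \<in> W" "d v v \<noteq> 0" and B: "span B = {x\<in>W. d v x = 0}"
  shows "span (insert v B) = W"
proof
  show "span (insert v B) \<subseteq> W"
    using W v span_superset[of B] unfolding B by (intro span_minimal) auto
  show "W \<subseteq> span (insert v B)"
  proof
    fix z assume z: "z \<in> W"
    let ?k = "d v z / d v v"
    have "z - scale ?k v \<in> W" using z v W subspace_diff subspace_scale by blast
    with orthogonal_projection[OF v(2)] have "z - scale ?k v \<in> span B" unfolding B by blast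
    then show "z \<in> span (insert v B)" using span_breakdown_eq by blast
  qed
qed

lemma exists_orthogonal_basis_subspace:
  "subspace W \<Longrightarrow> \<exists>B\<subseteq>W. independent B \<and> span B = W \<and> pairwise (\<lambda>x y. d x y = 0) B"
proof (induction "dim W" arbitrary: W rule: less_induct)
  case less
  show ?case
  proof (cases "\<forall>v\<in>W. d v v = 0")
    case True
    obtain B where "B \<subseteq> W" "independent B" "W \<subseteq> span B" by (rule basis_exists)
    moreover have "span B \<subseteq> W" using \<open>B \<subseteq> W\<close> less.prems by (rule span_minimal)
    ultimately show ?thesis
      using totally_isotropic_subspace[OF less.prems True]
      by (intro exI[of _ B]) (auto simp: pairwise_def)
  next
    case False
    then obtain v where v: "v \<in> W" "d v v \<noteq> 0" by blast
    define W' where "W' = {x\<in>W. d v x = 0}"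
    have W': "subspace W'" using less.prems unfolding subspace_def W'_def by auto
    have "W' \<subset> W" using v unfolding W'_def by auto
    moreover have "span W' = W'" "span W = W"
      using W' less.prems by (simp_all add: span_eq_iff)
    ultimately have "span W' \<subset> span W" by (simp only:)
    then have "dim W' < dim W" by (rule dim_psubset)
    from less.hyps[OF this W'] obtain B where
      B: "B \<subseteq> W'" "independent B" "span B = W'" "pairwise (\<lambda>x y. d x y = 0) B"
      by blast
    show ?thesis
    proof (intro exI[of _ "insert v B"] conjI)
      show "insert v B \<subseteq> W" using B(1) v unfolding W'_def by auto
      have "v \<notin> span B" using B(3) v unfolding W'_def by auto
      then show "independent (insert v B)" using B(2) by (rule independent_insertI)
      show "span (insert v B) = W"
        using span_insert_anisotropic[OF less.prems v] B(3) unfolding W'_def .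
      show "pairwise (\<lambda>x y. d x y = 0) (insert v B)"
        using B(1,4) d_commute unfolding W'_def by (auto simp: pairwise_insert)
    qed
  qed
qed

lemma exists_orthogonal_basis: "\<exists>B. orthogonal_basis scale d B"
  using exists_orthogonal_basis_subspace[OF subspace_UNIV] by (auto simp: orthogonal_basis_iff)

lemma gram_det_linear_combination:
  assumes len: "length cs = n" "length bs = n"
    and comb: "\<And>j. j < n \<Longrightarrow> cs ! j = (\<Sum>i<n. scale (r j i) (bs ! i))"
  shows "gram_det d cs = gram_det d bs * (det (mat n n (\<lambda>(i, j). r j i)))^2"
proof -
  define P where "P = mat n n (\<lambda>(i, j). r j i)"
  define G where "G = mat n n (\<lambda>(i, j). d (bs ! i) (bs ! j))"
  have entry: "d (cs ! j) (cs ! l) = (\<Sum>m<n. (\<Sum>i<n. r j i * d (bs ! i) (bs ! m)) * r l m)"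
    if "j < n" "l < n" for j l
    unfolding comb[OF that(1)] comb[OF that(2)] d_sum_left d_sum_right
    by (simp add: sum_distrib_left sum_distrib_right algebra_simps)
  have "mat n n (\<lambda>(i, j). d (cs ! i) (cs ! j)) = transpose_mat P * G * P"
    by (rule eq_matI) (auto simp: entry scalar_prod_def P_def G_def atLeast0LessThan)
  moreover have "P \<in> carrier_mat n n" "G \<in> carrier_mat n n" unfolding P_def G_def by auto
  ultimately show ?thesis
    using det_congruent_mat len unfolding gram_det_def P_def G_def by metis
qed

lemma gram_det_change_basis:
  assumes bs: "is_basis_list scale bs" and cs: "is_basis_list scale cs"
  shows "\<exists>u. gram_det d cs = gram_det d bs * u^2"
proof -
  have dist: "distinct bs" using bs by (simp add: is_basis_list_def)
  have "length cs = length bs"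
    using bs cs basis_card_eq_dim[of "set bs" UNIV] basis_card_eq_dim[of "set cs" UNIV]
    by (simp add: is_basis_list_def distinct_card)
  moreover have "cs ! j = (\<Sum>i<length bs. scale (representation (set bs) (cs ! j) (bs ! i)) (bs ! i))"
    if "j < length bs" for j
  proof -
    have "cs ! j = (\<Sum>b\<in>set bs. scale (representation (set bs) (cs ! j) b) b)"
      using bs sum_representation_eq[of "set bs" "cs ! j" "set bs"] by (simp add: is_basis_list_def)
    also have "\<dots> = (\<Sum>i<length bs. scale (representation (set bs) (cs ! j) (bs ! i)) (bs ! i))"
      using sum.reindex_bij_betw[OF bij_betw_nth[OF dist refl refl],
          of "\<lambda>b. scale (representation (set bs) (cs ! j) b) b"]
      by simp
    finally show ?thesis .
  qed
  ultimately show ?thesis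
    using gram_det_linear_combination[where r = "\<lambda>j i. representation (set bs) (cs ! j) (bs ! i)"]
    by blast
qed

end

locale nondegenerate_symmetric_bilinear_space = symmetric_bilinear_space scale Basis d
  for scale :: "'a::field \<Rightarrow> 'v::ab_group_add \<Rightarrow> 'v" and Basis :: "'v set"
    and d :: "'v \<Rightarrow> 'v \<Rightarrow> 'a" +
  assumes nondegenerate: "nondegenerate_form d"
begin

lemma orthogonal_basis_anisotropic:
  assumes B: "orthogonal_basis scale d B" and x: "x \<in> B"
  shows "d x x \<noteq> 0"
proof
  assume "d x x = 0"
  with B x have "\<forall>z\<in>B. d x z = 0" by (auto simp: orthogonal_basis_iff pairwise_def)
  moreover have "span B = UNIV" using B by (simp add: orthogonal_basis_iff)
  ultimately have "\<forall>y. d x y = 0" using orthogonal_to_span by blast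
  then have "x = 0" using nondegenerate unfolding nondegenerate_form_def by blast
  with B x show False using dependent_zero by (auto simp: orthogonal_basis_iff)
qed

lemma orthogonal_basis_replace_pair:
  assumes B: "orthogonal_basis scale d B" and e: "e1 \<in> B" "e2 \<in> B" "e1 \<noteq> e2"
    and vw: "v \<in> span {e1, e2}" "w \<in> span {e1, e2}" "d v w = 0" "d v v \<noteq> 0" "d w w \<noteq> 0"
  defines "R \<equiv> B - {e1, e2}"
  shows "orthogonal_basis scale d (insert v (insert w R))" and "v \<notin> R" "w \<notin> R" "v \<noteq> w"
proof -
  have orthB: "pairwise (\<lambda>x y. d x y = 0) B" and indB: "independent B"
    using B by (auto simp: orthogonal_basis_iff)
  have finB: "finite B" and cardB: "card B = dim (UNIV :: 'v set)"
    using orthogonal_basis_finite_card[OF B] by auto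
  have orthR: "d z v = 0 \<and> d z w = 0" if z: "z \<in> R" for z
  proof -
    have "\<forall>e\<in>{e1, e2}. d z e = 0" using z e orthB unfolding R_def by (auto simp: pairwise_def)
    then show ?thesis using orthogonal_to_span vw(1,2) by blast
  qed
  show vR: "v \<notin> R" and wR: "w \<notin> R" and "v \<noteq> w"
    using orthR[of v] orthR[of w] vw(3-5) by auto
  let ?B' = "insert v (insert w R)"
  have orth: "pairwise (\<lambda>x y. d x y = 0) ?B'"
    using orthR orthB vw(3) d_commute unfolding R_def by (auto simp: pairwise_insert pairwise_def)
  moreover have "\<forall>x\<in>?B'. d x x \<noteq> 0"
    using vw(4,5) orthogonal_basis_anisotropic[OF B] unfolding R_def by auto
  ultimately have ind: "independent ?B'" by (rule independent_if_pairwise_orthogonal)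
  have "card {e1, e2} \<le> card B" using finB e by (intro card_mono) auto
  then have "card R + 2 = card B" using finB e unfolding R_def by (simp add: card_Diff_subset)
  then have "card ?B' = dim (UNIV :: 'v set)"
    using finB vR wR \<open>v \<noteq> w\<close> cardB unfolding R_def by simp
  then have "span ?B' = UNIV"
    using card_ge_dim_independent[OF _ ind, of UNIV] by auto
  then show "orthogonal_basis scale d ?B'" using ind orth by (simp add: orthogonal_basis_iff)
qed

text \<open>If \<open>v = x e\<^sub>1 + y e\<^sub>2\<close>, then \<open>w = -y b e\<^sub>1 + x a e\<^sub>2\<close> (with \<open>a, b\<close> the values of \<open>e\<^sub>1, e\<^sub>2\<close>)
  is orthogonal to \<open>v\<close> and \<open>d(w,w) = a b d(v,v)\<close>.\<close>
lemma exists_orthogonal_basis_replace_pair: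
  assumes B: "orthogonal_basis scale d B" and e: "e1 \<in> B" "e2 \<in> B" "e1 \<noteq> e2"
    and t: "t \<noteq> 0" and xy: "d e1 e1 * x^2 + d e2 e2 * y^2 = t"
  obtains v w where "orthogonal_basis scale d (insert v (insert w (B - {e1, e2})))"
    "v \<notin> B - {e1, e2}" "w \<notin> B - {e1, e2}" "v \<noteq> w"
    "d v v = t" "d w w = d e1 e1 * d e2 e2 * t"
proof -
  have e12: "d e1 e2 = 0" "d e2 e1 = 0"
    using B e by (auto simp: orthogonal_basis_iff pairwise_def)
  define v where "v = scale x e1 + scale y e2"
  define w where "w = scale (- (y * d e2 e2)) e1 + scale (x * d e1 e1) e2"
  have span: "v \<in> span {e1, e2}" "w \<in> span {e1, e2}"
    unfolding v_def w_def by (intro span_add span_scale span_base; simp)+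
  have dvv: "d v v = t"
    using e12 xy unfolding v_def by (simp add: power2_eq_square algebra_simps)
  have dww: "d w w = d e1 e1 * d e2 e2 * t"
    using e12 xy[symmetric] unfolding w_def by (simp add: power2_eq_square algebra_simps)
  have dvw: "d v w = 0"
    using e12 unfolding v_def w_def by (simp add: algebra_simps)
  have "d w w \<noteq> 0" using dww orthogonal_basis_anisotropic[OF B] e t by simp
  with t dvv show ?thesis
    using orthogonal_basis_replace_pair[OF B e span dvw] dww by (intro that[of v w]) auto
qed

end

lemma obtain_distinct_pair:
  assumes "2 \<le> card S"
  obtains x y where "x \<in> S" "y \<in> S" "x \<noteq> y"
  using assms card_le_Suc0_iff_eq[of S] card.infinite[of S] by force

lemma same_parity_cases:
  "even (m::nat) \<longleftrightarrow> even n \<Longrightarrow> n = m \<or> n + 2 \<le> m \<or> m + 2 \<le> n"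
  unfolding even_iff_mod_2_eq_zero by presburger

locale finite_nondegenerate_symmetric_bilinear_space =
  nondegenerate_symmetric_bilinear_space scale Basis d
  for scale :: "'a::{field,finite} \<Rightarrow> 'v::ab_group_add \<Rightarrow> 'v" and Basis :: "'v set"
    and d :: "'v \<Rightarrow> 'v \<Rightarrow> 'a"
begin

lemma even_nonsquare_count_iff:
  assumes B: "orthogonal_basis scale d B" and bs: "is_basis_list scale bs"
  shows "even (nonsquare_count d B) \<longleftrightarrow> is_square (gram_det d bs)"
proof -
  have finB: "finite B" using orthogonal_basis_finite_card[OF B] by simp
  then obtain cs where cs: "distinct cs" "set cs = B" using finite_distinct_list by blast
  with B have "is_basis_list scale cs" by (simp add: is_basis_list_def orthogonal_basis_iff)
  then obtain u where u: "gram_det d cs = gram_det d bs * u^2"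
    using gram_det_change_basis[OF bs] by blast
  have "gram_det d cs = (\<Prod>x\<in>B. d x x)"
    using gram_det_pairwise_orthogonal[OF cs(1), of d] cs(2) B by (simp add: orthogonal_basis_iff)
  moreover have nz: "\<forall>x\<in>B. d x x \<noteq> 0" using orthogonal_basis_anisotropic[OF B] by blast
  ultimately have "gram_det d bs \<noteq> 0" "u^2 \<noteq> 0" "(\<Prod>x\<in>B. d x x) = gram_det d bs * u^2"
    using u finB by auto
  moreover have "is_square (u^2)" by (auto simp: is_square_def)
  ultimately have "is_square (\<Prod>x\<in>B. d x x) \<longleftrightarrow> is_square (gram_det d bs)"
    using is_square_mult_iff[OF two_neq_zero] by simp
  then show ?thesis
    using is_square_prod_iff_even_card[OF two_neq_zero finB nz] by (simp add: nonsquare_count_def)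
qed

lemma orthogonal_basis_nonsquare_count_add_two:
  assumes B: "orthogonal_basis scale d B" and le: "nonsquare_count d B + 2 \<le> dim (UNIV :: 'v set)"
  obtains B' where "orthogonal_basis scale d B'" "nonsquare_count d B' = nonsquare_count d B + 2"
proof -
  have finB: "finite B" and cardB: "card B = dim (UNIV :: 'v set)"
    using orthogonal_basis_finite_card[OF B] by auto
  let ?S = "{x\<in>B. is_square (d x x)}"
  have "card B = card ?S + nonsquare_count d B"
    unfolding nonsquare_count_def using finB
    by (subst card_Un_disjoint[symmetric]) (auto intro: arg_cong[of _ _ card])
  then have "2 \<le> card ?S" using le cardB by simp
  then obtain e1 e2 where e: "e1 \<in> ?S" "e2 \<in> ?S" "e1 \<noteq> e2"
    by (rule obtain_distinct_pair)
  obtain \<omega> :: 'a where \<omega>: "\<not> is_square \<omega>" using exists_nonsquare[OF two_neq_zero] by blast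
  then have "\<omega> \<noteq> 0" by (auto simp: is_square_def)
  moreover obtain x y where "d e1 e1 * x^2 + d e2 e2 * y^2 = \<omega>"
    using exists_diagonal_binary_form_eq[OF two_neq_zero] orthogonal_basis_anisotropic[OF B] e by blast
  ultimately obtain v w where vw: "orthogonal_basis scale d (insert v (insert w (B - {e1, e2})))"
    "v \<notin> B - {e1, e2}" "w \<notin> B - {e1, e2}" "v \<noteq> w"
    "d v v = \<omega>" "d w w = d e1 e1 * d e2 e2 * \<omega>"
    using exists_orthogonal_basis_replace_pair[OF B] e by blast
  have "is_square (d e1 e1 * d e2 e2)" "d e1 e1 * d e2 e2 \<noteq> 0"
    using e orthogonal_basis_anisotropic[OF B] is_square_mult_iff[OF two_neq_zero] by auto
  then have "\<not> is_square (d w w)" using vw(6) nonsquare_mult_square \<omega> by metis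
  moreover have "B = insert e1 (insert e2 (B - {e1, e2}))" using e by auto
  ultimately show ?thesis
    using that[OF vw(1)] vw \<omega> e finB nonsquare_count_insert_insert[of "B - {e1, e2}" e1 e2 d]
      nonsquare_count_insert_insert[of "B - {e1, e2}" v w d]
    by auto
qed

lemma orthogonal_basis_nonsquare_count_sub_two:
  assumes B: "orthogonal_basis scale d B" and le: "2 \<le> nonsquare_count d B"
  obtains B' where "orthogonal_basis scale d B'" "nonsquare_count d B' + 2 = nonsquare_count d B"
proof -
  have finB: "finite B" using orthogonal_basis_finite_card[OF B] by simp
  let ?N = "{x\<in>B. \<not> is_square (d x x)}"
  have "2 \<le> card ?N" using le by (simp add: nonsquare_count_def)
  then obtain e1 e2 where e: "e1 \<in> ?N" "e2 \<in> ?N" "e1 \<noteq> e2"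
    by (rule obtain_distinct_pair)
  obtain x y where "d e1 e1 * x^2 + d e2 e2 * y^2 = 1"
    using exists_diagonal_binary_form_eq[OF two_neq_zero] orthogonal_basis_anisotropic[OF B] e by blast
  then obtain v w where vw: "orthogonal_basis scale d (insert v (insert w (B - {e1, e2})))"
    "v \<notin> B - {e1, e2}" "w \<notin> B - {e1, e2}" "v \<noteq> w"
    "d v v = 1" "d w w = d e1 e1 * d e2 e2 * 1"
    using exists_orthogonal_basis_replace_pair[OF B _ _ e(3) one_neq_zero] e by blast
  have "is_square (d v v)" "is_square (d w w)"
    using vw(5,6) e is_square_mult_nonsquares[OF two_neq_zero]
    by (auto simp: is_square_def intro: exI[of _ 1])
  moreover have "B = insert e1 (insert e2 (B - {e1, e2}))" using e by auto
  ultimately show ?thesis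
    using that[OF vw(1)] vw e finB nonsquare_count_insert_insert[of "B - {e1, e2}" e1 e2 d]
      nonsquare_count_insert_insert[of "B - {e1, e2}" v w d]
    by auto
qed

lemma exists_orthogonal_basis_nonsquare_count:
  assumes B: "orthogonal_basis scale d B" and s: "s \<le> dim (UNIV :: 'v set)"
    and parity: "even s \<longleftrightarrow> even (nonsquare_count d B)"
  shows "\<exists>B'. orthogonal_basis scale d B' \<and> nonsquare_count d B' = s"
  using B parity
proof (induction B rule: measure_induct_rule[where
    f = "\<lambda>B. (nonsquare_count d B - s) + (s - nonsquare_count d B)"])
  case (less B)
  consider "nonsquare_count d B = s" | "nonsquare_count d B + 2 \<le> s"
    | "s + 2 \<le> nonsquare_count d B"
    using same_parity_cases[OF less.prems(2)] by blast
  then show ?case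
  proof cases
    case 1
    then show ?thesis using less.prems(1) by blast
  next
    case 2
    with s obtain B' where "orthogonal_basis scale d B'" "nonsquare_count d B' = nonsquare_count d B + 2"
      using orthogonal_basis_nonsquare_count_add_two[OF less.prems(1)] by auto
    with 2 less.prems(2) show ?thesis using less.IH[of B'] by auto
  next
    case 3
    then obtain B' where B': "orthogonal_basis scale d B'" "nonsquare_count d B' + 2 = nonsquare_count d B"
      using orthogonal_basis_nonsquare_count_sub_two[OF less.prems(1)] by auto
    moreover have "even s \<longleftrightarrow> even (nonsquare_count d B')"
      using less.prems(2) B'(2)[symmetric] by simp
    ultimately show ?thesis using less.IH[of B'] 3 by auto
  qed
qed

lemma nonsquare_counts_of_orthogonal_bases:
  assumes bs: "is_basis_list scale bs"
  shows "{nonsquare_count d B | B. orthogonal_basis scale d B}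
    = {s. s \<le> dim (UNIV :: 'v set) \<and> (even s \<longleftrightarrow> is_square (gram_det d bs))}"
proof (intro equalityI subsetI)
  fix s assume "s \<in> {nonsquare_count d B | B. orthogonal_basis scale d B}"
  then obtain B where B: "orthogonal_basis scale d B" and "s = nonsquare_count d B" by blast
  then show "s \<in> {s. s \<le> dim UNIV \<and> (even s \<longleftrightarrow> is_square (gram_det d bs))}"
    using nonsquare_count_le_card[of B d] orthogonal_basis_finite_card[OF B]
      even_nonsquare_count_iff[OF B bs]
    by auto
next
  fix s assume "s \<in> {s. s \<le> dim UNIV \<and> (even s \<longleftrightarrow> is_square (gram_det d bs))}"
  moreover obtain B where "orthogonal_basis scale d B" using exists_orthogonal_basis by blast
  ultimately show "s \<in> {nonsquare_count d B | B. orthogonal_basis scale d B}"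
    using exists_orthogonal_basis_nonsquare_count even_nonsquare_count_iff[OF _ bs] by auto
qed

end

lemma parity_class_eq:
  assumes "c \<in> {0, 1::nat}"
  shows "{s. s \<le> n \<and> (even s \<longleftrightarrow> c = 0)} = {c + 2 * k | k. c + 2 * k \<le> n}"
  using assms by (auto elim!: evenE oddE) presburger

lemma card_address_range:
  assumes "c \<le> n"
  shows "card {(n - (c + 2 * k), c + 2 * k) | k. c + 2 * k \<le> n} = 1 + (n - c) div 2"
proof -
  have "{(n - (c + 2 * k), c + 2 * k) | k. c + 2 * k \<le> n}
      = (\<lambda>k. (n - (c + 2 * k), c + 2 * k)) ` {..(n - c) div 2}"
    using assms by auto
  then show ?thesis by (simp add: card_image inj_on_def)
qed

theorem corollary6p3:
  fixes scale :: "'a::{field,finite} \<Rightarrow> 'v::ab_group_add \<Rightarrow> 'v"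
    and d :: "'v \<Rightarrow> 'v \<Rightarrow> 'a"
    and \<omega> :: 'a
    and c n :: nat
  assumes "(2::'a) \<noteq> 0"
    and "vector_space scale"
    and "\<not> is_square \<omega>"
    and "bilinear_form scale d" and "symmetric_form d" and "nondegenerate_form d"
    and "n = vector_space.dim scale UNIV"
    and "c \<in> {0, 1}"
    and "disc_is scale d (\<omega> ^ c)"
  shows "{address scale d B | B. orthogonal_basis scale d B}
           = {(n - (c + 2 * k), c + 2 * k) | k. c + 2 * k \<le> n}
       \<and> card {address scale d B | B. orthogonal_basis scale d B} = 1 + (n - c) div 2"
proof -
  from assms(9) obtain bs t where bs: "is_basis_list scale bs" and t: "t \<noteq> 0"
    and gram: "gram_det d bs = \<omega> ^ c * t^2"
    unfolding disc_is_def by blast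
  interpret vector_space scale by (rule assms(2))
  interpret finite_nondegenerate_symmetric_bilinear_space scale "set bs" d
    using assms bs by unfold_locales (auto simp: is_basis_list_def)
  have "is_square (gram_det d bs) \<longleftrightarrow> c = 0"
    unfolding gram using is_square_nonsquare_power_mult_square[OF assms(1,3) t assms(8)] .
  then have counts: "{nonsquare_count d B | B. orthogonal_basis scale d B}
      = {c + 2 * k | k. c + 2 * k \<le> n}"
    using nonsquare_counts_of_orthogonal_bases[OF bs] parity_class_eq[OF assms(8)] assms(7) by simp
  have "{address scale d B | B. orthogonal_basis scale d B}
      = (\<lambda>s. (n - s, s)) ` {nonsquare_count d B | B. orthogonal_basis scale d B}"
    by (auto simp: address_eq assms(7))
  also have "\<dots> = {(n - (c + 2 * k), c + 2 * k) | k. c + 2 * k \<le> n}"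
    unfolding counts by auto
  finally have addresses: "{address scale d B | B. orthogonal_basis scale d B}
      = {(n - (c + 2 * k), c + 2 * k) | k. c + 2 * k \<le> n}" .
  obtain B where "orthogonal_basis scale d B" using exists_orthogonal_basis by blast
  then have "nonsquare_count d B \<in> {c + 2 * k | k. c + 2 * k \<le> n}"
    unfolding counts[symmetric] by blast
  then have "c \<le> n" by auto
  with addresses show ?thesis using card_address_range by simp
qed

end
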